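(* Let $M$ be a nearly finitary matroid on ground set $E$ that is not $n$-nearly finitary for any $n\in\mathbb{N}$, and let $S\subseteq E$ be finite. Then the deletion $M-S$ is a nearly finitary matroid that is not $n$-nearly finitary for any $n\in\mathbb{N}$.
   Context: Matroids (possibly infinite): $\emptyset$ independent; subsets of independent sets independent; if $B$ is maximal independent and $A$ non-maximal independent, then $A\cup\{b\}$ is independent for some $b\in B\setminus A$; for independent $A\subseteq X\subseteq E$ there is a maximal independent $S'$ with $A\subseteq S'\subseteq X$. Bases are maximal independent sets. The deletion $M-S$ is the matroid on $E\setminus S$ whose independent sets are the independent sets of $M$ contained in $E\setminus S$. The finitarization $M^{\mathrm{fin}}$ has as independent sets those sets all of whose finite subsets are independent in $M$. $M$ is nearly finitary if $F\setminus B$ is finite whenever a base $F$ of $M^{\mathrm{fin}}$ contains a base $B$ of $M$; $n$-nearly finitary if $|F\setminus B|\le n$ for all such pairs. *)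

theory Defs
  imports Main
begin

definition max_indep :: "('a set \<Rightarrow> bool) \<Rightarrow> 'a set \<Rightarrow> 'a set \<Rightarrow> bool" where
  "max_indep Ind X B \<longleftrightarrow> B \<subseteq> X \<and> Ind B \<and> (\<forall>B'. B \<subseteq> B' \<and> B' \<subseteq> X \<and> Ind B' \<longrightarrow> B' = B)"

definition basis :: "'a set \<Rightarrow> ('a set \<Rightarrow> bool) \<Rightarrow> 'a set \<Rightarrow> bool" where
  "basis E Ind B \<longleftrightarrow> max_indep Ind E B"

definition matroid :: "'a set \<Rightarrow> ('a set \<Rightarrow> bool) \<Rightarrow> bool" where
  "matroid E Ind \<longleftrightarrow>
     (\<forall>A. Ind A \<longrightarrow> A \<subseteq> E) \<and>
     Ind {} \<and>
     (\<forall>A B. Ind B \<and> A \<subseteq> B \<longrightarrow> Ind A) \<and>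
     (\<forall>A B. basis E Ind B \<and> Ind A \<and> \<not> basis E Ind A \<longrightarrow>
            (\<exists>b \<in> B - A. Ind (insert b A))) \<and>
     (\<forall>A X. Ind A \<and> A \<subseteq> X \<and> X \<subseteq> E \<longrightarrow>
            (\<exists>S'. A \<subseteq> S' \<and> max_indep Ind X S'))"

definition fin_indep :: "'a set \<Rightarrow> ('a set \<Rightarrow> bool) \<Rightarrow> 'a set \<Rightarrow> bool" where
  "fin_indep E Ind A \<longleftrightarrow> A \<subseteq> E \<and> (\<forall>F. F \<subseteq> A \<and> finite F \<longrightarrow> Ind F)"

definition del_ground :: "'a set \<Rightarrow> 'a set \<Rightarrow> 'a set" where
  "del_ground E S = E - S"

definition del_indep :: "'a set \<Rightarrow> ('a set \<Rightarrow> bool) \<Rightarrow> 'a set \<Rightarrow> 'a set \<Rightarrow> bool" where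
  "del_indep E Ind S A \<longleftrightarrow> Ind A \<and> A \<subseteq> E - S"

definition nearly_finitary :: "'a set \<Rightarrow> ('a set \<Rightarrow> bool) \<Rightarrow> bool" where
  "nearly_finitary E Ind \<longleftrightarrow>
     (\<forall>F B. basis E (fin_indep E Ind) F \<and> basis E Ind B \<and> B \<subseteq> F \<longrightarrow> finite (F - B))"

definition n_nearly_finitary :: "nat \<Rightarrow> 'a set \<Rightarrow> ('a set \<Rightarrow> bool) \<Rightarrow> bool" where
  "n_nearly_finitary n E Ind \<longleftrightarrow>
     (\<forall>F B. basis E (fin_indep E Ind) F \<and> basis E Ind B \<and> B \<subseteq> F \<longrightarrow>
        finite (F - B) \<and> card (F - B) \<le> n)"

end

theory Submission
  imports Defs
begin

text \<open>
  Two maximal independent subsets of a set X \<subseteq> E that differ by finitely many elements on one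
  side differ by equally many on the other, by repeated exchange. Applied to M and to its
  finitarization, which is again a matroid, this shows that deleting a finite set S moves a base
  of either by at most |S| elements to a maximal independent subset of E - S. Comparing a pair
  B \<subseteq> F of bases of M - S and of its finitarization with such a pair for M then shows that F - B
  stays finite, and that |F - B| \<le> n for M - S would give |F - B| \<le> 2n + 3|S| for M.
\<close>

lemma max_indep_subset: "max_indep P X B \<Longrightarrow> B \<subseteq> X"
  unfolding max_indep_def by blast

lemma max_indep_indep: "max_indep P X B \<Longrightarrow> P B"
  unfolding max_indep_def by blast

lemma max_indep_maximal: "max_indep P X B \<Longrightarrow> B \<subseteq> B' \<Longrightarrow> B' \<subseteq> X \<Longrightarrow> P B' \<Longrightarrow> B' = B"
  unfolding max_indep_def by blast

lemma max_indepI: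
  "B \<subseteq> X \<Longrightarrow> P B \<Longrightarrow> (\<And>B'. B \<subseteq> B' \<Longrightarrow> B' \<subseteq> X \<Longrightarrow> P B' \<Longrightarrow> B' = B) \<Longrightarrow> max_indep P X B"
  unfolding max_indep_def by blast

lemma max_indep_insert: "max_indep P X B \<Longrightarrow> x \<in> X \<Longrightarrow> x \<notin> B \<Longrightarrow> \<not> P (insert x B)"
  using max_indep_maximal[of P X B "insert x B"] max_indep_subset[of P X B] by auto

lemma max_indep_restrict_iff:
  "X \<subseteq> Z \<Longrightarrow> max_indep (\<lambda>A. P A \<and> A \<subseteq> Z) X B \<longleftrightarrow> max_indep P X B"
  unfolding max_indep_def by (metis order_trans)

lemma not_max_indep_insert:
  assumes down: "\<And>C D. P D \<Longrightarrow> C \<subseteq> D \<Longrightarrow> P C"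
    and "P A" "A \<subseteq> X" "\<not> max_indep P X A"
  obtains x where "x \<in> X - A" "P (insert x A)"
proof -
  obtain B where "A \<subseteq> B" "B \<subseteq> X" "P B" "B \<noteq> A"
    using assms(2-4) max_indepI[of A X P] by metis
  then obtain x where "x \<in> B - A" by blast
  then show thesis using that down[OF \<open>P B\<close>] \<open>A \<subseteq> B\<close> \<open>B \<subseteq> X\<close> by auto
qed

lemma finite_card_le_if_subset_Un:
  assumes "C \<subseteq> A \<union> B" "finite A" "finite B"
  shows "finite C" "card C \<le> card A + card B"
  using assms finite_subset card_mono[of "A \<union> B" C] card_Un_le[of A B] by auto

locale matroid_on =
  fixes E :: "'a set" and Ind :: "'a set \<Rightarrow> bool"
  assumes matroid: "matroid E Ind"
begin

lemma indep_subset_ground: "Ind A \<Longrightarrow> A \<subseteq> E"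
  using matroid unfolding matroid_def by (elim conjE allE) (erule mp)

lemma indep_empty: "Ind {}"
  using matroid unfolding matroid_def by (elim conjE)

lemma indep_subset: "Ind B \<Longrightarrow> A \<subseteq> B \<Longrightarrow> Ind A"
  using matroid unfolding matroid_def by (elim conjE allE) (erule mp, rule conjI)

lemma basis_augment:
  "basis E Ind B \<Longrightarrow> Ind A \<Longrightarrow> \<not> basis E Ind A \<Longrightarrow> \<exists>b\<in>B - A. Ind (insert b A)"
  using matroid unfolding matroid_def by (elim conjE allE) (erule mp, simp)

lemma extend_to_max_indep:
  assumes "Ind A" "A \<subseteq> X" "X \<subseteq> E"
  obtains B where "A \<subseteq> B" "max_indep Ind X B"
proof -
  have "\<exists>B. A \<subseteq> B \<and> max_indep Ind X B"
    using matroid assms unfolding matroid_def by (elim conjE allE) (erule mp, simp)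
  then show thesis using that by blast
qed

lemma extend_to_basis:
  assumes "Ind A"
  obtains B where "A \<subseteq> B" "basis E Ind B"
  using extend_to_max_indep[OF assms indep_subset_ground[OF assms] order_refl]
  unfolding basis_def by blast

lemma basis_indep: "basis E Ind B \<Longrightarrow> Ind B"
  unfolding basis_def by (rule max_indep_indep)

lemma basis_subset_ground: "basis E Ind B \<Longrightarrow> B \<subseteq> E"
  unfolding basis_def by (rule max_indep_subset)

lemma basis_of_max_indep_superset:
  assumes K: "max_indep Ind Y K" and "basis E Ind B" "B \<subseteq> Y"
  shows "basis E Ind K"
proof (rule ccontr)
  assume "\<not> basis E Ind K"
  then obtain b where "b \<in> B - K" "Ind (insert b K)"
    using basis_augment assms(2) max_indep_indep[OF K] by blast
  then show False using max_indep_insert[OF K] \<open>B \<subseteq> Y\<close> by auto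
qed

lemma basis_union_outside:
  assumes B: "max_indep Ind X B" and "basis E Ind K" "Ind (B \<union> (K - X))"
  shows "basis E Ind (B \<union> (K - X))"
proof (rule ccontr)
  assume "\<not> basis E Ind (B \<union> (K - X))"
  then obtain k where k: "k \<in> K - (B \<union> (K - X))" "Ind (insert k (B \<union> (K - X)))"
    using basis_augment assms(2,3) by blast
  have "Ind (insert k B)" by (rule indep_subset[OF k(2)]) blast
  then show False using max_indep_insert[OF B] k by blast
qed

text \<open>Extend B to a base B' of E and A + x to a maximal independent K inside A + x \<union> B'. Then
  K is a base, and its part K - X outside X can be added to both A and B, which reduces the
  claim to augmentation between bases of E.\<close>

lemma max_indep_augment:
  assumes X: "X \<subseteq> E" and B: "max_indep Ind X B"
    and A: "Ind A" "A \<subseteq> X" "\<not> max_indep Ind X A"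
  shows "\<exists>b\<in>B - A. Ind (insert b A)"
proof -
  obtain x where x: "x \<in> X - A" "Ind (insert x A)"
    by (rule not_max_indep_insert[of Ind A X]) (use indep_subset A in blast)+
  obtain B' where "B \<subseteq> B'" and B': "basis E Ind B'"
    using extend_to_basis[OF max_indep_indep[OF B]] by blast
  let ?Y = "insert x A \<union> B'"
  obtain K where K: "insert x A \<subseteq> K" "max_indep Ind ?Y K"
    using extend_to_max_indep[OF x(2), of ?Y] x X A basis_subset_ground[OF B'] by auto
  have "basis E Ind K" using basis_of_max_indep_superset[OF K(2) B'] by blast
  have KY: "K \<subseteq> ?Y" "Ind K" using max_indep_subset[OF K(2)] max_indep_indep[OF K(2)] .
  have "K - X \<subseteq> B'" using KY(1) x A by auto
  then have "basis E Ind (B \<union> (K - X))"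
    using basis_union_outside[OF B \<open>basis E Ind K\<close>] indep_subset[OF basis_indep[OF B']] \<open>B \<subseteq> B'\<close> by auto
  moreover have "Ind (A \<union> (K - X))" using indep_subset[OF KY(2)] K(1) by auto
  moreover have "\<not> basis E Ind (A \<union> (K - X))"
  proof
    assume "basis E Ind (A \<union> (K - X))"
    then have "K = A \<union> (K - X)"
      using max_indep_maximal[of Ind E "A \<union> (K - X)" K] K(1) KY indep_subset_ground
      unfolding basis_def by blast
    then show False using K(1) x by blast
  qed
  ultimately obtain b where "b \<in> (B \<union> (K - X)) - (A \<union> (K - X))" "Ind (insert b (A \<union> (K - X)))"
    using basis_augment by blast
  then show ?thesis using indep_subset[of "insert b (A \<union> (K - X))" "insert b A"] by blast
qed

lemma max_indep_exchange:
  assumes X: "X \<subseteq> E" and B1: "max_indep Ind X B1" and B2: "max_indep Ind X B2"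
    and x: "x \<in> B1 - B2"
  obtains y where "y \<in> B2 - B1" "max_indep Ind X (insert y (B1 - {x}))"
proof -
  have B1X: "Ind B1" "B1 \<subseteq> X" using max_indep_indep[OF B1] max_indep_subset[OF B1] .
  have "\<not> max_indep Ind X (B1 - {x})"
    using max_indep_maximal[of Ind X "B1 - {x}" B1] B1X x by blast
  then obtain y where y: "y \<in> B2 - (B1 - {x})" "Ind (insert y (B1 - {x}))"
    using max_indep_augment[OF X B2, of "B1 - {x}"] indep_subset[OF B1X(1)] B1X(2) by blast
  have "y \<notin> B1" "y \<in> X" using y x max_indep_subset[OF B2] by auto
  let ?B = "insert y (B1 - {x})"
  have "max_indep Ind X ?B"
  proof (rule ccontr)
    assume "\<not> max_indep Ind X ?B"
    then obtain b where b: "b \<in> B1 - ?B" "Ind (insert b ?B)"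
      using max_indep_augment[OF X B1 y(2)] B1X(2) \<open>y \<in> X\<close> by blast
    then have "insert b ?B = insert y B1" using x by blast
    then have "Ind (insert y B1)" using b(2) by simp
    then show False using max_indep_insert[OF B1 \<open>y \<in> X\<close> \<open>y \<notin> B1\<close>] by blast
  qed
  then show thesis using that y \<open>y \<notin> B1\<close> by blast
qed

lemma max_indep_diff_card_eq:
  assumes X: "X \<subseteq> E" and B1: "max_indep Ind X B1" and B2: "max_indep Ind X B2"
    and fin: "finite (B1 - B2)"
  shows "finite (B2 - B1) \<and> card (B2 - B1) = card (B1 - B2)"
  using B1 fin
proof (induction "card (B1 - B2)" arbitrary: B1)
  case 0
  then have "B1 \<subseteq> B2" by auto
  then have "B2 = B1"
    using max_indep_maximal[OF 0(2)] max_indep_subset[OF B2] max_indep_indep[OF B2] by blast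
  then show ?case by simp
next
  case (Suc n)
  then obtain x where x: "x \<in> B1 - B2" by (metis card.empty ex_in_conv nat.distinct(1))
  obtain y where y: "y \<in> B2 - B1" and B1': "max_indep Ind X (insert y (B1 - {x}))"
    using max_indep_exchange[OF X Suc.prems(1) B2 x] by blast
  let ?B1' = "insert y (B1 - {x})"
  have "?B1' - B2 = (B1 - B2) - {x}" using y by auto
  then have "finite (B2 - ?B1') \<and> card (B2 - ?B1') = n"
    using Suc.hyps(1)[OF _ B1'] Suc.hyps(2) Suc.prems(2) x by auto
  moreover have "B2 - B1 = insert y (B2 - ?B1')" "y \<notin> B2 - ?B1'" using x y by auto
  ultimately show ?case using Suc.hyps(2) by (metis card_insert_disjoint finite_insert)
qed

lemma finite_card_indep_diff_le:
  assumes X: "X \<subseteq> E" and B: "max_indep Ind X B" and A: "Ind A" "A \<subseteq> X"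
    and fin: "finite (B - A)"
  shows "finite (A - B) \<and> card (A - B) \<le> card (B - A)"
proof -
  obtain B2 where B2: "A \<subseteq> B2" "max_indep Ind X B2" using extend_to_max_indep A X by blast
  have sub: "A - B \<subseteq> B2 - B" "B - B2 \<subseteq> B - A" using B2(1) by auto
  then have "finite (B - B2)" using fin finite_subset by blast
  then have eq: "finite (B2 - B) \<and> card (B2 - B) = card (B - B2)"
    using max_indep_diff_card_eq[OF X B B2(2)] by blast
  have "card (A - B) \<le> card (B2 - B)" using eq sub(1) card_mono by blast
  moreover have "card (B - B2) \<le> card (B - A)" using fin sub(2) card_mono by blast
  ultimately show ?thesis using eq sub(1) finite_subset by auto
qed

lemma card_max_indep_eq:
  assumes X: "X \<subseteq> E" "finite X" and B1: "max_indep Ind X B1" and B2: "max_indep Ind X B2"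
  shows "card B1 = card B2"
proof -
  have "finite B1" "finite B2"
    using max_indep_subset[OF B1] max_indep_subset[OF B2] X(2) finite_subset by blast+
  moreover have "card (B2 - B1) = card (B1 - B2)"
    using max_indep_diff_card_eq[OF X(1) B1 B2] \<open>finite B1\<close> by blast
  ultimately show ?thesis using card_Int_Diff[of B1 B2] card_Int_Diff[of B2 B1] by (simp add: Int_commute)
qed

text \<open>A and a maximal independent subset of A \<union> K + x through K but avoiding x are both
  maximal in the finite set A \<union> K, so they have equal size; A + x would be larger.\<close>

lemma dependent_insert_spanned:
  assumes A: "max_indep Ind (A \<union> K) A" and fin: "finite (A \<union> K)" and K: "Ind K"
    and x: "x \<in> E" "x \<notin> A" "\<not> Ind (insert x K)"
  shows "\<not> Ind (insert x A)"
proof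
  assume Ax: "Ind (insert x A)"
  let ?Y = "insert x (A \<union> K)"
  have Y: "?Y \<subseteq> E" "finite ?Y"
    using x indep_subset_ground[OF K] indep_subset_ground[OF max_indep_indep[OF A]] fin by auto
  obtain Ks where Ks: "K \<subseteq> Ks" "max_indep Ind ?Y Ks" using extend_to_max_indep[OF K _ Y(1)] by blast
  have "x \<notin> Ks" using x(3) indep_subset[OF max_indep_indep[OF Ks(2)]] Ks(1) by blast
  then have "max_indep Ind (A \<union> K) Ks"
    using Ks(2) max_indep_subset[OF Ks(2)] unfolding max_indep_def by blast
  then have "card A = card Ks" using card_max_indep_eq[OF _ fin A] Y(1) by blast
  obtain As where As: "insert x A \<subseteq> As" "max_indep Ind ?Y As"
    using extend_to_max_indep[OF Ax _ Y(1)] by blast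
  have "card As = card Ks" using card_max_indep_eq[OF Y As(2) Ks(2)] .
  moreover have "card (insert x A) \<le> card As"
    using As card_mono[of As] max_indep_subset[OF As(2)] Y(2) finite_subset by blast
  ultimately show False using \<open>card A = card Ks\<close> x(2) fin by auto
qed

lemma max_indep_of_dependent_inserts:
  assumes "Ind A" and dep: "\<And>y. y \<in> K - A \<Longrightarrow> \<exists>C\<subseteq>A. \<not> Ind (insert y C)"
  shows "max_indep Ind (A \<union> K) A"
proof (rule max_indepI)
  fix B assume B: "A \<subseteq> B" "B \<subseteq> A \<union> K" "Ind B"
  show "B = A"
  proof (rule ccontr)
    assume "B \<noteq> A"
    then obtain y where y: "y \<in> K - A" "y \<in> B" using B by blast
    then obtain C where C: "C \<subseteq> A" "\<not> Ind (insert y C)" using dep by blast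
    have "insert y C \<subseteq> B" using C(1) y(2) B(1) by blast
    then show False using indep_subset[OF B(3)] C(2) by blast
  qed
qed (use assms in auto)

end

lemma fin_indep_subset_ground: "fin_indep E P A \<Longrightarrow> A \<subseteq> E"
  unfolding fin_indep_def by blast

lemma fin_indep_finite_subset: "fin_indep E P A \<Longrightarrow> finite F \<Longrightarrow> F \<subseteq> A \<Longrightarrow> P F"
  unfolding fin_indep_def by blast

lemma fin_indep_subset: "fin_indep E P B \<Longrightarrow> A \<subseteq> B \<Longrightarrow> fin_indep E P A"
  unfolding fin_indep_def by blast

lemma fin_indep_Union_chain:
  assumes "\<C> \<noteq> {}" "subset.chain {A. fin_indep E P A} \<C>"
  shows "fin_indep E P (\<Union>\<C>)"
  unfolding fin_indep_def
proof (intro conjI allI impI)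
  have C: "fin_indep E P A" if "A \<in> \<C>" for A
    using assms(2) that unfolding subset.chain_def by blast
  then show "\<Union>\<C> \<subseteq> E" using fin_indep_subset_ground by (meson Union_least)
  fix F assume "F \<subseteq> \<Union>\<C> \<and> finite F"
  then obtain A where "A \<in> \<C>" "F \<subseteq> A"
    using finite_subset_Union_chain[OF _ _ assms] by blast
  then show "P F" using C fin_indep_finite_subset \<open>F \<subseteq> \<Union>\<C> \<and> finite F\<close> by blast
qed

lemma fin_indep_extend:
  assumes A: "fin_indep E P A" "A \<subseteq> X" and X: "X \<subseteq> E"
  obtains B where "A \<subseteq> B" "max_indep (fin_indep E P) X B"
proof -
  define \<A> where "\<A> = {B. A \<subseteq> B \<and> B \<subseteq> X \<and> fin_indep E P B}"
  have "\<Union>\<C> \<in> \<A>" if "\<C> \<noteq> {}" "subset.chain \<A> \<C>" for \<C>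
  proof -
    have "subset.chain {A. fin_indep E P A} \<C>" "\<C> \<subseteq> \<A>"
      using that(2) unfolding subset.chain_def \<A>_def by blast+
    then show ?thesis using fin_indep_Union_chain[OF that(1)] that(1) unfolding \<A>_def by blast
  qed
  moreover have "\<A> \<noteq> {}" using A unfolding \<A>_def by blast
  ultimately obtain B where B: "B \<in> \<A>" "\<forall>B'\<in>\<A>. B \<subseteq> B' \<longrightarrow> B' = B"
    using subset_Zorn_nonempty[of \<A>] by blast
  then have "max_indep (fin_indep E P) X B" by (intro max_indepI) (auto simp: \<A>_def)
  then show thesis using that B(1) unfolding \<A>_def by blast
qed

context matroid_on
begin

lemma indep_imp_fin_indep: "Ind A \<Longrightarrow> fin_indep E Ind A"
  unfolding fin_indep_def using indep_subset_ground indep_subset by blast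

lemma finite_dependent_insert:
  assumes A: "fin_indep E Ind A" and x: "x \<in> E" and dep: "\<not> fin_indep E Ind (insert x A)"
  obtains K where "finite K" "K \<subseteq> A" "\<not> Ind (insert x K)"
proof -
  obtain G where G: "G \<subseteq> insert x A" "finite G" "\<not> Ind G"
    using dep x fin_indep_subset_ground[OF A] unfolding fin_indep_def by blast
  then have "\<not> Ind (insert x (G - {x}))" using indep_subset by blast
  then show thesis using that G by blast
qed

text \<open>If no element of F augments A in the finitarization, then x, which does, is spanned
  by a finite K \<subseteq> F, and each element of K outside A is spanned by a finite part of A.
  Together these finite parts form a finite A0 \<subseteq> A spanning K, so A0 + x would be dependent.\<close>

lemma fin_indep_basis_augment:
  assumes F: "basis E (fin_indep E Ind) F" and A: "fin_indep E Ind A"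
    and nA: "\<not> basis E (fin_indep E Ind) A"
  shows "\<exists>f\<in>F - A. fin_indep E Ind (insert f A)"
proof (rule ccontr)
  assume no_aug: "\<not> ?thesis"
  have F': "max_indep (fin_indep E Ind) E F" using F by (simp add: basis_def)
  obtain x where x: "x \<in> E - A" "fin_indep E Ind (insert x A)"
    by (rule not_max_indep_insert[of "fin_indep E Ind" A E])
      (use fin_indep_subset A fin_indep_subset_ground[OF A] nA[unfolded basis_def] in blast)+
  then have "x \<notin> F" using no_aug by blast
  then obtain K where K: "finite K" "K \<subseteq> F" "\<not> Ind (insert x K)"
    using finite_dependent_insert[OF max_indep_indep[OF F']] max_indep_insert[OF F'] x by blast
  have "\<forall>f\<in>K - A. \<exists>C. finite C \<and> C \<subseteq> A \<and> \<not> Ind (insert f C)"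
  proof
    fix f assume f: "f \<in> K - A"
    then have "f \<in> E" "\<not> fin_indep E Ind (insert f A)"
      using no_aug K(2) max_indep_subset[OF F'] by auto
    then show "\<exists>C. finite C \<and> C \<subseteq> A \<and> \<not> Ind (insert f C)"
      using finite_dependent_insert[OF A] by metis
  qed
  then obtain g where g: "\<And>f. f \<in> K - A \<Longrightarrow> finite (g f) \<and> g f \<subseteq> A \<and> \<not> Ind (insert f (g f))"
    by metis
  define A0 where "A0 = (K \<inter> A) \<union> \<Union>(g ` (K - A))"
  have A0: "finite A0" "A0 \<subseteq> A" using g K(1) unfolding A0_def by auto
  have "max_indep Ind (A0 \<union> K) A0"
  proof (rule max_indep_of_dependent_inserts)
    show "Ind A0" using fin_indep_finite_subset[OF A A0] .
    fix y assume "y \<in> K - A0"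
    then have "y \<in> K - A" unfolding A0_def by blast
    then show "\<exists>C\<subseteq>A0. \<not> Ind (insert y C)" using g unfolding A0_def by blast
  qed
  then have "\<not> Ind (insert x A0)"
    using dependent_insert_spanned A0 K x fin_indep_finite_subset[OF max_indep_indep[OF F'] K(1,2)]
    by blast
  moreover have "Ind (insert x A0)" using fin_indep_finite_subset[OF x(2)] A0 by blast
  ultimately show False by blast
qed

lemma matroid_fin_indep: "matroid E (fin_indep E Ind)"
  unfolding matroid_def
proof (intro conjI allI impI; (elim conjE)?)
  show "fin_indep E Ind {}" using indep_imp_fin_indep[OF indep_empty] .
  show "\<exists>S'. A \<subseteq> S' \<and> max_indep (fin_indep E Ind) X S'"
    if "fin_indep E Ind A" "A \<subseteq> X" "X \<subseteq> E" for A X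
    using fin_indep_extend[OF that] by blast
qed (fact fin_indep_subset_ground fin_indep_subset fin_indep_basis_augment)+

lemma matroid_restrict:
  assumes Z: "Z \<subseteq> E"
  shows "matroid Z (\<lambda>A. Ind A \<and> A \<subseteq> Z)"
  unfolding matroid_def
proof (intro conjI allI impI; (elim conjE)?)
  have basis_iff: "basis Z (\<lambda>A. Ind A \<and> A \<subseteq> Z) B \<longleftrightarrow> max_indep Ind Z B" for B
    using max_indep_restrict_iff[of Z Z Ind B] by (simp add: basis_def)
  show "\<exists>b\<in>B - A. Ind (insert b A) \<and> insert b A \<subseteq> Z"
    if asm: "basis Z (\<lambda>A. Ind A \<and> A \<subseteq> Z) B" "Ind A" "A \<subseteq> Z"
      "\<not> basis Z (\<lambda>A. Ind A \<and> A \<subseteq> Z) A" for A B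
  proof -
    have B: "max_indep Ind Z B" and "\<not> max_indep Ind Z A" using asm basis_iff by auto
    then obtain b where "b \<in> B - A" "Ind (insert b A)" using max_indep_augment[OF Z B asm(2,3)] by blast
    then show ?thesis using max_indep_subset[OF B] asm(3) by blast
  qed
  show "\<exists>S'. A \<subseteq> S' \<and> max_indep (\<lambda>A. Ind A \<and> A \<subseteq> Z) X S'"
    if asm: "Ind A" "A \<subseteq> X" "X \<subseteq> Z" for A X
  proof -
    have "X \<subseteq> E" using asm(3) Z by blast
    then obtain B where "A \<subseteq> B" "max_indep Ind X B" using extend_to_max_indep[OF asm(1,2)] by blast
    then show ?thesis using max_indep_restrict_iff[OF asm(3)] by blast
  qed
qed (use indep_empty indep_subset in blast)+

end

lemma del_indep_eq: "del_indep E Ind S = (\<lambda>A. Ind A \<and> A \<subseteq> E - S)"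
  by (rule ext) (simp add: del_indep_def)

lemma basis_deletion_iff:
  "basis (del_ground E S) (del_indep E Ind S) B \<longleftrightarrow> max_indep Ind (E - S) B"
  unfolding basis_def del_ground_def del_indep_eq by (rule max_indep_restrict_iff) simp

lemma basis_fin_deletion_iff:
  "basis (del_ground E S) (fin_indep (del_ground E S) (del_indep E Ind S)) F
     \<longleftrightarrow> max_indep (fin_indep E Ind) (E - S) F"
proof -
  have "fin_indep (E - S) (\<lambda>A. Ind A \<and> A \<subseteq> E - S) = (\<lambda>A. fin_indep E Ind A \<and> A \<subseteq> E - S)"
    by (rule ext) (auto simp: fin_indep_def)
  then show ?thesis
    unfolding basis_def del_ground_def del_indep_eq by (simp add: max_indep_restrict_iff)
qed

context matroid_on
begin

lemma matroid_deletion: "matroid (del_ground E S) (del_indep E Ind S)"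
  unfolding del_ground_def del_indep_eq by (rule matroid_restrict) blast

lemma max_indep_deletion_near_basis:
  assumes B: "basis E Ind B" and S: "finite S"
  obtains B' where "max_indep Ind (E - S) B'" "finite (B' - B)" "card (B' - B) \<le> card S"
proof -
  have "Ind (B - S)" using indep_subset[OF basis_indep[OF B]] by blast
  moreover have "B - S \<subseteq> E - S" using basis_subset_ground[OF B] by blast
  ultimately obtain B' where "B - S \<subseteq> B'" and B': "max_indep Ind (E - S) B'"
    using extend_to_max_indep[OF _ _ Diff_subset] by blast
  have "B - B' \<subseteq> S" using \<open>B - S \<subseteq> B'\<close> by blast
  then have "finite (B - B')" "card (B - B') \<le> card S"
    using finite_subset[OF _ S] card_mono[OF S] by blast+
  moreover have "B' \<subseteq> E" using max_indep_subset[OF B'] by blast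
  ultimately have "finite (B' - B)" "card (B' - B) \<le> card S"
    using finite_card_indep_diff_le[OF order_refl B[unfolded basis_def] max_indep_indep[OF B']]
    by fastforce+
  then show thesis using that B' by blast
qed

lemma nearly_finitary_deletion:
  assumes nf: "nearly_finitary E Ind" and S: "finite S"
  shows "nearly_finitary (del_ground E S) (del_indep E Ind S)"
  unfolding nearly_finitary_def basis_deletion_iff basis_fin_deletion_iff
proof (intro allI impI, elim conjE)
  interpret fin: matroid_on E "fin_indep E Ind" by (rule matroid_on.intro, rule matroid_fin_indep)
  fix F' B'
  assume F': "max_indep (fin_indep E Ind) (E - S) F'" and B': "max_indep Ind (E - S) B'"
    and "B' \<subseteq> F'"
  obtain B where "B' \<subseteq> B" and B: "basis E Ind B"
    using extend_to_basis[OF max_indep_indep[OF B']] by blast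
  have "B \<inter> (E - S) = B'"
    by (rule max_indep_maximal[OF B'])
      (use \<open>B' \<subseteq> B\<close> max_indep_subset[OF B'] indep_subset[OF basis_indep[OF B]] in auto)
  obtain F where "B \<subseteq> F" and F: "basis E (fin_indep E Ind) F"
    using fin.extend_to_basis[OF indep_imp_fin_indep[OF basis_indep[OF B]]] by blast
  have "finite (F - B)" using nf B F \<open>B \<subseteq> F\<close> unfolding nearly_finitary_def by blast
  obtain F1 where F1: "max_indep (fin_indep E Ind) (E - S) F1" and "finite (F1 - F)"
    using fin.max_indep_deletion_near_basis[OF F S] by blast
  moreover have "F1 - B' \<subseteq> (F1 - F) \<union> (F - B)"
    using \<open>B \<inter> (E - S) = B'\<close> max_indep_subset[OF F1] by blast
  ultimately have "finite (F1 - B')"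
    using finite_card_le_if_subset_Un(1) \<open>finite (F - B)\<close> by blast
  then have "finite (F1 - F')" using \<open>B' \<subseteq> F'\<close> finite_subset[of "F1 - F'" "F1 - B'"] by blast
  then have "finite (F' - F1)"
    using fin.finite_card_indep_diff_le[OF Diff_subset F1 max_indep_indep[OF F'] max_indep_subset[OF F']]
    by blast
  moreover have "F' - B' \<subseteq> (F' - F1) \<union> (F1 - B')" by blast
  ultimately show "finite (F' - B')"
    using finite_card_le_if_subset_Un(1) \<open>finite (F1 - B')\<close> by blast
qed

lemma n_nearly_finitary_of_deletion:
  assumes S: "finite S" and nnf: "n_nearly_finitary n (del_ground E S) (del_indep E Ind S)"
  shows "n_nearly_finitary (2 * n + 3 * card S) E Ind"
  unfolding n_nearly_finitary_def
proof (intro allI impI, elim conjE)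
  interpret fin: matroid_on E "fin_indep E Ind" by (rule matroid_on.intro, rule matroid_fin_indep)
  fix F B
  assume F: "basis E (fin_indep E Ind) F" and B: "basis E Ind B" and "B \<subseteq> F"
  obtain B' where B': "max_indep Ind (E - S) B'" and B'B: "finite (B' - B)" "card (B' - B) \<le> card S"
    using max_indep_deletion_near_basis[OF B S] by blast
  obtain F' where "B' \<subseteq> F'" and F': "max_indep (fin_indep E Ind) (E - S) F'"
    using fin.extend_to_max_indep[OF indep_imp_fin_indep[OF max_indep_indep[OF B']]
        max_indep_subset[OF B'] Diff_subset] by blast
  have "finite (F' - B') \<and> card (F' - B') \<le> n"
    using nnf F' B' \<open>B' \<subseteq> F'\<close>
    unfolding n_nearly_finitary_def basis_deletion_iff basis_fin_deletion_iff by blast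
  then have F'B': "finite (F' - B')" "card (F' - B') \<le> n" by auto
  have "F' - (F - S) \<subseteq> (F' - B') \<union> (B' - B)" using \<open>B \<subseteq> F\<close> max_indep_subset[OF F'] by blast
  from finite_card_le_if_subset_Un[OF this F'B'(1) B'B(1)]
  have "finite (F' - (F - S))" "card (F' - (F - S)) \<le> n + card S"
    using F'B'(2) B'B(2) by linarith+
  moreover have "fin_indep E Ind (F - S)" "F - S \<subseteq> E - S"
    using fin.indep_subset[OF fin.basis_indep[OF F]] fin.basis_subset_ground[OF F] by auto
  ultimately have FF': "finite ((F - S) - F')" "card ((F - S) - F') \<le> n + card S"
    using fin.finite_card_indep_diff_le[OF Diff_subset F'] by fastforce+
  have U1: "finite (S \<union> ((F - S) - F'))" "card (S \<union> ((F - S) - F')) \<le> card S + (n + card S)"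
    using finite_card_le_if_subset_Un[OF order_refl S FF'(1)] FF'(2) by linarith+
  have U2: "finite ((F' - B') \<union> (B' - B))" "card ((F' - B') \<union> (B' - B)) \<le> n + card S"
    using finite_card_le_if_subset_Un[OF order_refl F'B'(1) B'B(1)] F'B'(2) B'B(2) by linarith+
  have "F - B \<subseteq> (S \<union> ((F - S) - F')) \<union> ((F' - B') \<union> (B' - B))" by blast
  from finite_card_le_if_subset_Un[OF this U1(1) U2(1)]
  show "finite (F - B) \<and> card (F - B) \<le> 2 * n + 3 * card S" using U1(2) U2(2) by linarith
qed

end

theorem theorem3p4p7:
  fixes E S :: "'a set" and Ind :: "'a set \<Rightarrow> bool"
  assumes "matroid E Ind"
    and "nearly_finitary E Ind"
    and "\<forall>n. \<not> n_nearly_finitary n E Ind"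
    and "S \<subseteq> E" and "finite S"
  shows "matroid (del_ground E S) (del_indep E Ind S)
         \<and> nearly_finitary (del_ground E S) (del_indep E Ind S)
         \<and> (\<forall>n. \<not> n_nearly_finitary n (del_ground E S) (del_indep E Ind S))"
proof -
  interpret matroid_on E Ind by (rule matroid_on.intro, fact assms(1))
  show ?thesis
    using matroid_deletion nearly_finitary_deletion[OF assms(2,5)]
      n_nearly_finitary_of_deletion[OF assms(5)] assms(3) by blast
qed

end
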